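(* Let $d\ge 1$, $n_1,\dots,n_d\ge 1$, $R\ge 1$, and let $\bm{U}_p\in\mathbb{R}^{n_p\times R}$ for $p=1,\dots,d$. Let $\mathcal{A}\in\mathbb{R}^{n_1\times\cdots\times n_d}$ be the CP tensor $$\mathcal{A}=\sum_{r=1}^R \bm{U}_1(:,r)\circ\bm{U}_2(:,r)\circ\cdots\circ\bm{U}_d(:,r),\quad\text{i.e.}\quad \mathcal{A}(i_1,\dots,i_d)=\sum_{r=1}^R\prod_{p=1}^d \bm{U}_p(i_p,r).$$ Let $1\le k\le \prod_{p=1}^d n_p$. Consider the optimization problem over matrices $\bm{X}_p\in\mathbb{R}^{n_p\times k}$, $p=1,\dots,d$: $$\max\ \sum_{j=1}^k\sum_{r=1}^R\prod_{p=1}^d\langle \bm{X}_p(:,j),\,\bm{U}_p(:,r)*\bm{X}_p(:,j)\rangle$$ subject to $\|\bm{X}_p(:,j)\|_2=1$ for all $p=1,\dots,d$ and $j=1,\dots,k$, and $$\prod_{p=1}^d\langle \bm{X}_p(:,i),\bm{X}_p(:,j)\rangle=\begin{cases}1,& i=j,\\ 0,& i\ne j,\end{cases}\qquad i,j=1,\dots,k.$$ Then retrieving the $k$ largest elements of $\mathcal{A}$ is equivalent to solving this problem: its maximum value equals the sum of the $k$ largest entries of $\mathcal{A}$ (counted with multiplicity over the $\prod_p n_p$ positions), and it is attained by choosing distinct multi-indices $(i^{(j)}_1,\dots,i^{(j)}_d)$, $j=1,\dots,k$, at which the $k$ largest entries of $\mathcal{A}$ occur and setting $\bm{X}_p(:,j)=\bm{e}_{i^{(j)}_p}$,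 the $i^{(j)}_p$-th standard basis vector of $\mathbb{R}^{n_p}$.
   Context: $\circ$ denotes the vector outer product, $*$ the entrywise (Hadamard) product of vectors, and $\langle\cdot,\cdot\rangle$ the Euclidean inner product; thus $\langle \bm{x},\bm{u}*\bm{x}\rangle=\sum_{l}\bm{u}(l)\bm{x}(l)^2$. $\bm{X}(:,j)$ denotes the $j$-th column of a matrix $\bm{X}$. The paper states the theorem informally as "retrieving the $k$ largest elements of $\mathcal{A}$ is equivalent to solving the continuous constrained optimization problem"; the precise sense stated here (optimal value equals the sum of the $k$ largest entries, attained at standard basis vectors located at those entries) is the meaning of that equivalence. *)

theory Defs
  imports Complex_Main "HOL-Library.FuncSet"
begin

text \<open>Conventions: all indices are 0-based. A matrix U_p in R^(n_p x R) is
  U p i r (i < n p, r < R); a matrix X_p in R^(n_p x k) is X p l j (l < n p, j < k).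
  Multi-indices are functions idx on {0..<d} with idx p < n p (extensional).\<close>

definition positions :: "nat \<Rightarrow> (nat \<Rightarrow> nat) \<Rightarrow> (nat \<Rightarrow> nat) set" where
  "positions d n = PiE {0..<d} (\<lambda>p. {0..<n p})"

definition cp_entry :: "nat \<Rightarrow> nat \<Rightarrow> (nat \<Rightarrow> nat \<Rightarrow> nat \<Rightarrow> real) \<Rightarrow> (nat \<Rightarrow> nat) \<Rightarrow> real" where
  "cp_entry d R U idx = (\<Sum>r<R. \<Prod>p<d. U p (idx p) r)"

definition topk_sum :: "nat \<Rightarrow> (nat \<Rightarrow> nat) \<Rightarrow> nat \<Rightarrow> (nat \<Rightarrow> nat \<Rightarrow> nat \<Rightarrow> real) \<Rightarrow> nat \<Rightarrow> real" where
  "topk_sum d n R U k = Max {(\<Sum>idx\<in>S. cp_entry d R U idx) | S. S \<subseteq> positions d n \<and> card S = k}"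

definition col_inner :: "(nat \<Rightarrow> nat) \<Rightarrow> (nat \<Rightarrow> nat \<Rightarrow> nat \<Rightarrow> real) \<Rightarrow> nat \<Rightarrow> nat \<Rightarrow> nat \<Rightarrow> real" where
  "col_inner n X p i j = (\<Sum>l<n p. X p l i * X p l j)"

definition objective :: "nat \<Rightarrow> (nat \<Rightarrow> nat) \<Rightarrow> nat \<Rightarrow> (nat \<Rightarrow> nat \<Rightarrow> nat \<Rightarrow> real) \<Rightarrow> nat \<Rightarrow> (nat \<Rightarrow> nat \<Rightarrow> nat \<Rightarrow> real) \<Rightarrow> real" where
  "objective d n R U k X = (\<Sum>j<k. \<Sum>r<R. \<Prod>p<d. (\<Sum>l<n p. X p l j * (U p l r * X p l j)))"

definition feasible :: "nat \<Rightarrow> (nat \<Rightarrow> nat) \<Rightarrow> nat \<Rightarrow> (nat \<Rightarrow> nat \<Rightarrow> nat \<Rightarrow> real) \<Rightarrow> bool" where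
  "feasible d n k X \<longleftrightarrow>
     (\<forall>p<d. \<forall>j<k. sqrt (col_inner n X p j j) = 1) \<and>
     (\<forall>i<k. \<forall>j<k. (\<Prod>p<d. col_inner n X p i j) = (if i = j then 1 else 0))"

definition topk_selection :: "nat \<Rightarrow> (nat \<Rightarrow> nat) \<Rightarrow> nat \<Rightarrow> (nat \<Rightarrow> nat \<Rightarrow> nat \<Rightarrow> real) \<Rightarrow> nat \<Rightarrow> (nat \<Rightarrow> nat \<Rightarrow> nat) \<Rightarrow> bool" where
  "topk_selection d n R U k sel \<longleftrightarrow>
     (\<forall>j<k. sel j \<in> positions d n) \<and> inj_on sel {0..<k} \<and>
     (\<forall>b\<in>positions d n - sel ` {0..<k}. \<forall>j<k. cp_entry d R U b \<le> cp_entry d R U (sel j))"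

definition basis_choice :: "(nat \<Rightarrow> nat \<Rightarrow> nat) \<Rightarrow> nat \<Rightarrow> nat \<Rightarrow> nat \<Rightarrow> real" where
  "basis_choice sel p l j = (if l = sel j p then 1 else 0)"

end

theory Submission imports Defs begin

text \<open>Put T_j(i_1,...,i_d) = X_1(i_1,j) ... X_d(i_d,j), the j-th column of the Khatri-Rao
  product of the X_p. Expanding the products of sums, the objective becomes
  \<Sum>_i w(i) A(i) with weights w(i) = \<Sum>_j T_j(i)^2, and the constraint says precisely that
  the T_j are orthonormal in the space of tensors. By Bessel's inequality every weight lies
  in [0,1], and the weights sum to k; a weighted sum of entries with such weights is at most
  the sum of the k largest entries. Standard basis vectors placed at the top k positions
  make the T_j distinct unit tensors and attain this bound.\<close>

lemma finite_positions: "finite (positions d n)"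
  unfolding positions_def by (simp add: finite_PiE)

lemma card_positions: "card (positions d n) = (\<Prod>p<d. n p)"
  unfolding positions_def by (simp add: card_PiE lessThan_atLeast0)

lemma positions_less: "idx \<in> positions d n \<Longrightarrow> p < d \<Longrightarrow> idx p < n p"
  by (auto simp: positions_def PiE_iff)

lemma positions_eqI:
  "a \<in> positions d n \<Longrightarrow> b \<in> positions d n \<Longrightarrow> (\<And>p. p < d \<Longrightarrow> a p = b p) \<Longrightarrow> a = b"
  unfolding positions_def by (rule PiE_ext[of _ "{0..<d}" "\<lambda>p. {0..<n p}"]) auto

lemma prod_sum_eq_sum_positions:
  fixes f :: "nat \<Rightarrow> nat \<Rightarrow> 'a::comm_semiring_1"
  shows "(\<Prod>p<d. \<Sum>l<n p. f p l) = (\<Sum>idx\<in>positions d n. \<Prod>p<d. f p (idx p))"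
  using prod_sum_PiE[of "{0..<d}" "\<lambda>p. {0..<n p}" f]
  by (simp add: positions_def lessThan_atLeast0)

lemma exists_top_subset:
  fixes A :: "'a \<Rightarrow> 'b::linorder"
  assumes "finite P" "k \<le> card P"
  shows "\<exists>S. S \<subseteq> P \<and> card S = k \<and> (\<forall>b\<in>P - S. \<forall>a\<in>S. A b \<le> A a)"
  using assms(2)
proof (induction k)
  case 0
  then show ?case by auto
next
  case (Suc k)
  then obtain S where S: "S \<subseteq> P" "card S = k" "\<forall>b\<in>P - S. \<forall>a\<in>S. A b \<le> A a"
    by auto
  have "finite (P - S)" "P - S \<noteq> {}"
    using assms(1) S Suc.prems by (auto dest: card_mono[OF assms(1)])
  then obtain a where a: "a \<in> P - S" "\<forall>b\<in>P - S. A b \<le> A a"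
    using Max_in[of "A ` (P - S)"] Max_ge[of "A ` (P - S)"] by fastforce
  have "finite S" using S(1) assms(1) finite_subset by blast
  then show ?case
    using a S by (intro exI[of _ "insert a S"]) auto
qed

text \<open>The continuous knapsack bound: the threshold t = min A(S) separates the top set S
  from the rest, and shifting mass from S to P - S can only lose value.\<close>

lemma weighted_sum_le_top_sum:
  fixes A W :: "'a \<Rightarrow> real"
  assumes fin: "finite P" and SP: "S \<subseteq> P" and ne: "S \<noteq> {}"
    and top: "\<forall>b\<in>P - S. \<forall>a\<in>S. A b \<le> A a"
    and W_nonneg: "\<forall>x\<in>P. 0 \<le> W x" and W_le_1: "\<forall>x\<in>P. W x \<le> 1"
    and W_sum: "(\<Sum>x\<in>P. W x) = card S"
  shows "(\<Sum>x\<in>P. W x * A x) \<le> (\<Sum>x\<in>S. A x)"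
proof -
  have finS: "finite S" using fin SP finite_subset by blast
  define t where "t = Min (A ` S)"
  have t_le: "\<forall>a\<in>S. t \<le> A a" unfolding t_def using finS by auto
  have le_t: "\<forall>b\<in>P - S. A b \<le> t"
    using top Min_in[of "A ` S"] finS ne unfolding t_def by fastforce
  have split: "(\<Sum>x\<in>P. f x) = (\<Sum>x\<in>S. f x) + (\<Sum>x\<in>P - S. f x)" for f :: "'a \<Rightarrow> real"
    using fin SP by (metis sum.subset_diff add.commute)
  have "(\<Sum>x\<in>S. W x * A x) \<le> (\<Sum>x\<in>S. A x + (W x - 1) * t)"
  proof (rule sum_mono)
    fix x assume "x \<in> S"
    then have "(W x - 1) * A x \<le> (W x - 1) * t"
      using W_le_1 SP t_le by (intro mult_left_mono_neg) auto
    then show "W x * A x \<le> A x + (W x - 1) * t" by (simp add: algebra_simps)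
  qed
  moreover have "(\<Sum>x\<in>P - S. W x * A x) \<le> (\<Sum>x\<in>P - S. W x * t)"
    using W_nonneg le_t by (intro sum_mono mult_left_mono) auto
  moreover have "(\<Sum>x\<in>S. A x + (W x - 1) * t) + (\<Sum>x\<in>P - S. W x * t)
      = (\<Sum>x\<in>S. A x) + t * ((\<Sum>x\<in>P. W x) - card S)"
    by (simp add: split[of W] sum.distrib sum_subtractf algebra_simps
        sum_distrib_left sum_distrib_right)
  ultimately show ?thesis using split[of "\<lambda>x. W x * A x"] W_sum by simp
qed

lemma bessel_inequality_coordinate:
  fixes T :: "nat \<Rightarrow> 'a \<Rightarrow> real"
  assumes fin: "finite P" and e: "e \<in> P"
    and orth: "\<forall>i<k. \<forall>j<k. (\<Sum>x\<in>P. T i x * T j x) = (if i = j then 1 else 0)"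
  shows "(\<Sum>j<k. (T j e)\<^sup>2) \<le> 1"
proof -
  define s where "s x = (\<Sum>j<k. T j e * T j x)" for x
  define \<delta> where "\<delta> x = (of_bool (x = e) :: real)" for x
  have "(\<Sum>x\<in>P. (s x)\<^sup>2) = (\<Sum>x\<in>P. \<Sum>i<k. \<Sum>j<k. T i e * T j e * (T i x * T j x))"
    unfolding s_def power2_eq_square sum_product by (simp add: algebra_simps)
  also have "\<dots> = (\<Sum>i<k. \<Sum>j<k. \<Sum>x\<in>P. T i e * T j e * (T i x * T j x))"
    by (subst sum.swap) (rule sum.cong[OF refl], rule sum.swap)
  also have "\<dots> = (\<Sum>i<k. \<Sum>j<k. T i e * T j e * (\<Sum>x\<in>P. T i x * T j x))"
    by (simp add: sum_distrib_left)
  also have "\<dots> = (\<Sum>i<k. \<Sum>j<k. T i e * T j e * (if i = j then 1 else 0))"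
    using orth by (intro sum.cong refl) auto
  also have "\<dots> = (\<Sum>j<k. (T j e)\<^sup>2)"
    by (simp add: power2_eq_square if_distrib cong: if_cong)
  finally have s_norm: "(\<Sum>x\<in>P. (s x)\<^sup>2) = (\<Sum>j<k. (T j e)\<^sup>2)" .
  have "(\<Sum>x\<in>P. \<delta> x * s x) = s e" "(\<Sum>x\<in>P. (\<delta> x)\<^sup>2) = 1"
    using fin e by (simp_all add: \<delta>_def power2_eq_square)
  moreover have "s e = (\<Sum>j<k. (T j e)\<^sup>2)" by (simp add: s_def power2_eq_square)
  moreover have "0 \<le> (\<Sum>x\<in>P. (\<delta> x - s x)\<^sup>2)" by (simp add: sum_nonneg)
  moreover have "\<dots> = (\<Sum>x\<in>P. (\<delta> x)\<^sup>2) - 2 * (\<Sum>x\<in>P. \<delta> x * s x) + (\<Sum>x\<in>P. (s x)\<^sup>2)"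
    by (simp add: power2_diff sum.distrib sum_subtractf sum_distrib_left algebra_simps)
  ultimately show ?thesis using s_norm by simp
qed

definition kr_column :: "nat \<Rightarrow> (nat \<Rightarrow> nat \<Rightarrow> nat \<Rightarrow> real) \<Rightarrow> nat \<Rightarrow> (nat \<Rightarrow> nat) \<Rightarrow> real" where
  "kr_column d X j idx = (\<Prod>p<d. X p (idx p) j)"

lemma inner_kr_column:
  "(\<Sum>idx\<in>positions d n. kr_column d X i idx * kr_column d X j idx) = (\<Prod>p<d. col_inner n X p i j)"
  by (simp add: kr_column_def col_inner_def prod_sum_eq_sum_positions prod.distrib)

lemma objective_eq_weighted_entries:
  "objective d n R U k X
     = (\<Sum>idx\<in>positions d n. (\<Sum>j<k. (kr_column d X j idx)\<^sup>2) * cp_entry d R U idx)"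
proof -
  let ?P = "positions d n" and ?T = "kr_column d X"
  have "objective d n R U k X
      = (\<Sum>j<k. \<Sum>r<R. \<Sum>idx\<in>?P. \<Prod>p<d. X p (idx p) j * (U p (idx p) r * X p (idx p) j))"
    unfolding objective_def by (simp add: prod_sum_eq_sum_positions)
  also have "\<dots> = (\<Sum>j<k. \<Sum>r<R. \<Sum>idx\<in>?P. (?T j idx)\<^sup>2 * (\<Prod>p<d. U p (idx p) r))"
    unfolding kr_column_def power2_eq_square by (simp add: prod.distrib[symmetric] algebra_simps)
  also have "\<dots> = (\<Sum>j<k. \<Sum>idx\<in>?P. \<Sum>r<R. (?T j idx)\<^sup>2 * (\<Prod>p<d. U p (idx p) r))"
    by (intro sum.cong refl) (rule sum.swap)
  also have "\<dots> = (\<Sum>idx\<in>?P. \<Sum>j<k. (?T j idx)\<^sup>2 * cp_entry d R U idx)"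
    by (subst sum.swap) (simp add: cp_entry_def sum_distrib_left)
  also have "\<dots> = (\<Sum>idx\<in>?P. (\<Sum>j<k. (?T j idx)\<^sup>2) * cp_entry d R U idx)"
    by (simp add: sum_distrib_right)
  finally show ?thesis .
qed

lemma topk_sum_eq_top_subset:
  assumes SP: "S \<subseteq> positions d n" and card_S: "card S = k" and k: "1 \<le> k"
    and top: "\<forall>b\<in>positions d n - S. \<forall>a\<in>S. cp_entry d R U b \<le> cp_entry d R U a"
  shows "topk_sum d n R U k = (\<Sum>x\<in>S. cp_entry d R U x)"
proof -
  let ?P = "positions d n" and ?A = "cp_entry d R U"
  let ?subsets = "{S. S \<subseteq> ?P \<and> card S = k}"
  have fin: "finite ?P" by (rule finite_positions)
  have "topk_sum d n R U k = Max ((\<lambda>S. \<Sum>x\<in>S. ?A x) ` ?subsets)"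
    unfolding topk_sum_def by (simp add: setcompr_eq_image)
  also have "\<dots> = (\<Sum>x\<in>S. ?A x)"
  proof (rule Max_eqI)
    show "finite ((\<lambda>S. \<Sum>x\<in>S. ?A x) ` ?subsets)"
      using fin by (auto intro: finite_imageI finite_subset[of _ "Pow ?P"])
    show "(\<Sum>x\<in>S. ?A x) \<in> (\<lambda>S. \<Sum>x\<in>S. ?A x) ` ?subsets"
      using SP card_S by auto
  next
    fix y assume "y \<in> (\<lambda>S. \<Sum>x\<in>S. ?A x) ` ?subsets"
    then obtain S' where S': "S' \<subseteq> ?P" "card S' = k" "y = (\<Sum>x\<in>S'. ?A x)" by auto
    define W where "W x = (of_bool (x \<in> S') :: real)" for x
    have W_A: "(\<Sum>x\<in>?P. W x * ?A x) = y" and W_sum: "(\<Sum>x\<in>?P. W x) = card S"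
      using S' fin card_S by (simp_all add: W_def Int_absorb1)
    have "(\<Sum>x\<in>?P. W x * ?A x) \<le> (\<Sum>x\<in>S. ?A x)"
    proof (rule weighted_sum_le_top_sum[OF fin SP _ top _ _ W_sum])
      show "S \<noteq> {}" using card_S k by auto
      show "\<forall>x\<in>?P. 0 \<le> W x" "\<forall>x\<in>?P. W x \<le> 1" by (simp_all add: W_def)
    qed
    then show "y \<le> (\<Sum>x\<in>S. ?A x)" using W_A by simp
  qed
  finally show ?thesis .
qed

lemma objective_le_topk_sum:
  assumes feas: "feasible d n k X" and k: "1 \<le> k" "k \<le> card (positions d n)"
  shows "objective d n R U k X \<le> topk_sum d n R U k"
proof -
  let ?P = "positions d n" and ?T = "kr_column d X"
  have fin: "finite ?P" by (rule finite_positions)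
  obtain S where S: "S \<subseteq> ?P" "card S = k"
      "\<forall>b\<in>?P - S. \<forall>a\<in>S. cp_entry d R U b \<le> cp_entry d R U a"
    using exists_top_subset[OF fin k(2)] by blast
  have orth: "\<forall>i<k. \<forall>j<k. (\<Sum>x\<in>?P. ?T i x * ?T j x) = (if i = j then 1 else 0)"
    using feas unfolding feasible_def inner_kr_column by simp
  have "(\<Sum>x\<in>?P. (\<Sum>j<k. (?T j x)\<^sup>2)) = (\<Sum>j<k. \<Sum>x\<in>?P. ?T j x * ?T j x)"
    unfolding power2_eq_square by (rule sum.swap)
  also have "\<dots> = card S" using orth S(2) by simp
  finally have "(\<Sum>x\<in>?P. (\<Sum>j<k. (?T j x)\<^sup>2) * cp_entry d R U x) \<le> (\<Sum>x\<in>S. cp_entry d R U x)"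
    using fin S k(1) bessel_inequality_coordinate[OF fin _ orth]
    by (intro weighted_sum_le_top_sum) (auto simp: sum_nonneg)
  then show ?thesis
    using topk_sum_eq_top_subset[OF S(1,2) k(1) S(3)] by (simp add: objective_eq_weighted_entries)
qed

lemma topk_selection_exists:
  assumes "k \<le> card (positions d n)"
  shows "\<exists>sel. topk_selection d n R U k sel"
proof -
  obtain S where S: "S \<subseteq> positions d n" "card S = k"
      "\<forall>b\<in>positions d n - S. \<forall>a\<in>S. cp_entry d R U b \<le> cp_entry d R U a"
    using exists_top_subset[OF finite_positions assms] by blast
  moreover have "finite S" using S(1) finite_positions finite_subset by blast
  ultimately obtain sel where "bij_betw sel {0..<k} S"
    using ex_bij_betw_nat_finite by metis
  then have inj: "inj_on sel {0..<k}" and img: "sel ` {0..<k} = S"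
    by (simp_all add: bij_betw_def)
  have "topk_selection d n R U k sel"
    unfolding topk_selection_def
  proof (intro conjI inj)
    show "\<forall>j<k. sel j \<in> positions d n" using S(1) img by auto
    show "\<forall>b\<in>positions d n - sel ` {0..<k}. \<forall>j<k. cp_entry d R U b \<le> cp_entry d R U (sel j)"
      using S(3) img by auto
  qed
  then show ?thesis by blast
qed

lemma topk_sum_eq_selection:
  assumes "topk_selection d n R U k sel" "1 \<le> k"
  shows "topk_sum d n R U k = (\<Sum>j<k. cp_entry d R U (sel j))"
proof -
  have inj: "inj_on sel {..<k}"
    using assms(1) by (simp add: topk_selection_def lessThan_atLeast0)
  moreover have "sel ` {..<k} \<subseteq> positions d n"
    and "\<forall>b\<in>positions d n - sel ` {..<k}. \<forall>a\<in>sel ` {..<k}. cp_entry d R U b \<le> cp_entry d R U a"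
    using assms(1) by (auto simp: topk_selection_def lessThan_atLeast0)
  ultimately have "topk_sum d n R U k = (\<Sum>x\<in>sel ` {..<k}. cp_entry d R U x)"
    using assms(2) by (intro topk_sum_eq_top_subset) (simp_all add: card_image)
  then show ?thesis using inj by (simp add: sum.reindex)
qed

lemma col_inner_basis_choice:
  assumes "sel i p < n p"
  shows "col_inner n (basis_choice sel) p i j = (if sel i p = sel j p then 1 else 0)"
proof -
  have "col_inner n (basis_choice sel) p i j
      = (\<Sum>l<n p. if l = sel i p then (if sel i p = sel j p then 1 else 0) else 0)"
    unfolding col_inner_def basis_choice_def by (intro sum.cong) auto
  then show ?thesis using assms by simp
qed

lemma feasible_basis_choice:
  assumes pos: "\<forall>j<k. sel j \<in> positions d n" and inj: "inj_on sel {0..<k}"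
  shows "feasible d n k (basis_choice sel)"
proof -
  have lt: "sel j p < n p" if "j < k" "p < d" for j p
    using pos that by (blast intro: positions_less)
  have "(\<Prod>p<d. col_inner n (basis_choice sel) p i j) = (if i = j then 1 else 0)"
    if ij: "i < k" "j < k" for i j
  proof -
    have "(\<Prod>p<d. col_inner n (basis_choice sel) p i j) = (\<Prod>p<d. if sel i p = sel j p then 1 else 0)"
      using lt[OF ij(1)] by (simp add: col_inner_basis_choice)
    also have "\<dots> = (if \<forall>p<d. sel i p = sel j p then 1 else 0)"
      by (auto simp: prod_zero_iff)
    also have "(\<forall>p<d. sel i p = sel j p) \<longleftrightarrow> sel i = sel j"
      using pos ij positions_eqI[of "sel i" d n "sel j"] by auto
    also have "sel i = sel j \<longleftrightarrow> i = j"
      using inj ij by (auto simp: inj_on_def)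
    finally show ?thesis .
  qed
  then show ?thesis
    using lt by (simp add: feasible_def col_inner_basis_choice)
qed

lemma objective_basis_choice:
  assumes pos: "\<forall>j<k. sel j \<in> positions d n"
  shows "objective d n R U k (basis_choice sel) = (\<Sum>j<k. cp_entry d R U (sel j))"
proof -
  have "(\<Sum>l<n p. basis_choice sel p l j * (U p l r * basis_choice sel p l j)) = U p (sel j p) r"
    if "j < k" "p < d" for j p r
  proof -
    have "sel j p < n p" using pos that by (blast intro: positions_less)
    moreover have "(\<Sum>l<n p. basis_choice sel p l j * (U p l r * basis_choice sel p l j))
        = (\<Sum>l<n p. if l = sel j p then U p (sel j p) r else 0)"
      unfolding basis_choice_def by (intro sum.cong) auto
    ultimately show ?thesis by simp
  qed
  then show ?thesis
    unfolding objective_def cp_entry_def by (intro sum.cong refl prod.cong) auto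
qed

theorem theorem1:
  fixes d R k :: nat and n :: "nat \<Rightarrow> nat" and U :: "nat \<Rightarrow> nat \<Rightarrow> nat \<Rightarrow> real"
  assumes "d \<ge> 1" and "\<forall>p<d. n p \<ge> 1" and "R \<ge> 1"
    and "1 \<le> k" and "k \<le> (\<Prod>p<d. n p)"
  shows "(\<forall>X. feasible d n k X \<longrightarrow> objective d n R U k X \<le> topk_sum d n R U k)
       \<and> (\<exists>X. feasible d n k X \<and> objective d n R U k X = topk_sum d n R U k)
       \<and> (\<exists>sel. topk_selection d n R U k sel)
       \<and> (\<forall>sel. topk_selection d n R U k sel \<longrightarrow>
              feasible d n k (basis_choice sel) \<and>
              objective d n R U k (basis_choice sel) = topk_sum d n R U k)"
proof -
  have k: "1 \<le> k" "k \<le> card (positions d n)"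
    using assms(4,5) by (simp_all add: card_positions)
  have attained: "feasible d n k (basis_choice sel)
      \<and> objective d n R U k (basis_choice sel) = topk_sum d n R U k"
    if sel: "topk_selection d n R U k sel" for sel
  proof -
    have "\<forall>j<k. sel j \<in> positions d n" "inj_on sel {0..<k}"
      using sel by (simp_all add: topk_selection_def)
    then show ?thesis
      by (simp add: feasible_basis_choice objective_basis_choice topk_sum_eq_selection[OF sel k(1)])
  qed
  obtain sel where "topk_selection d n R U k sel"
    using topk_selection_exists[OF k(2)] by blast
  then show ?thesis
    using attained objective_le_topk_sum[OF _ k] by blast
qed

end
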